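(* Let $u_1=(1,0)$, $u_2=(0,1)$, $u_3=(-1,-1)$ in $\mathbb{Z}^2$, $S=\{u_1,u_2,u_3\}$, $P_{u_i}=P_i$ ($i=1,2,3$) the orthogonal projection of $\mathbb{C}^3$ onto $\mathbb{C}\mathbf{e}_i$, $\mathcal{S}=\sum_{i=1}^3\tau^{u_i}P_{u_i}$ and $G_3=\frac23J-I$ with $J$ the $3\times3$ all-ones matrix. Then the unitary operator $\mathcal{S}^*G_3\mathcal{S}G_3$ on $\ell^2(\mathbb{Z}^2,\mathbb{C}^3)$ has eigenvalue $1$.
   Context: $(\tau^\alpha f)(x)=f(x-\alpha)$ on $\ell^2(\mathbb{Z}^2,\mathbb{C}^3)$; $G_3$ acts pointwise; $\mathbf{e}_1,\mathbf{e}_2,\mathbf{e}_3$ is the standard basis of $\mathbb{C}^3$. Eigenvalue means point spectrum. *)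

theory Defs
  imports "HOL-Analysis.Analysis"
begin

type_synonym field2 = "int \<times> int \<Rightarrow> complex ^ 3"

definition ell2 :: "field2 set" where
  "ell2 = {f. (\<lambda>x. (norm (f x))^2) summable_on UNIV}"

definition tau :: "int \<times> int \<Rightarrow> field2 \<Rightarrow> field2" where
  "tau \<alpha> f = (\<lambda>x. f (fst x - fst \<alpha>, snd x - snd \<alpha>))"

definition e :: "3 \<Rightarrow> complex ^ 3" where
  "e i = axis i 1"

definition Proj :: "3 \<Rightarrow> complex ^ 3 \<Rightarrow> complex ^ 3" where
  "Proj i v = (v $ i) *s e i"

definition pw :: "(complex ^ 3 \<Rightarrow> complex ^ 3) \<Rightarrow> field2 \<Rightarrow> field2" where
  "pw A f = (\<lambda>x. A (f x))"

definition u :: "3 \<Rightarrow> int \<times> int" where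
  "u i = (if i = 1 then (1, 0) else if i = 2 then (0, 1) else (-1, -1))"

definition shiftS :: "field2 \<Rightarrow> field2" where
  "shiftS f = (\<lambda>x. \<Sum>i\<in>UNIV. tau (u i) (pw (Proj i) f) x)"

text \<open>Its adjoint S* = sum_i P_{u_i} tau^{-u_i}  (tau^alpha is unitary with inverse tau^{-alpha},
  P_i is self-adjoint).\<close>
definition shiftS_adj :: "field2 \<Rightarrow> field2" where
  "shiftS_adj f = (\<lambda>x. \<Sum>i\<in>UNIV. pw (Proj i) (tau (- fst (u i), - snd (u i)) f) x)"

definition J3 :: "complex ^ 3 ^ 3" where
  "J3 = (\<chi> i j. 1)"

definition G3 :: "complex ^ 3 ^ 3" where
  "G3 = (2/3 :: real) *\<^sub>R J3 - mat 1"

definition Uop :: "field2 \<Rightarrow> field2" where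
  "Uop f = shiftS_adj (pw ((*v) G3) (shiftS (pw ((*v) G3) f)))"

definition has_eigenvalue :: "(field2 \<Rightarrow> field2) \<Rightarrow> complex \<Rightarrow> bool" where
  "has_eigenvalue T c \<longleftrightarrow> (\<exists>f\<in>ell2. f \<noteq> (\<lambda>_. 0) \<and> T f = (\<lambda>x. c *s f x))"

end

theory Submission
  imports Defs
begin

text \<open>
  \<open>G\<^sub>3\<close> acts as \<open>-1\<close> on every vector of \<open>\<complex>\<^sup>3\<close> whose coordinates sum to zero, and
  \<open>\<S>\<^sup>*\<S> = I\<close>. Hence if both \<open>f\<close> and \<open>\<S>f\<close> have coordinate sum zero at every site, then
  \<open>\<S>\<^sup>*G\<^sub>3\<S>G\<^sub>3f = \<S>\<^sup>*G\<^sub>3\<S>(-f) = \<S>\<^sup>*\<S>f = f\<close>. Such an \<open>f\<close> with finite support exists: put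
  \<open>\<plusminus>1\<close> entries at three sites so that, after each coordinate \<open>k\<close> is moved by \<open>u\<^sub>k\<close>,
  the entries cancel again.
\<close>

lemma shiftS_component: "shiftS f x $ k = f (x - u k) $ k"
proof -
  have "shiftS f x $ k = (\<Sum>i\<in>UNIV. f (x - u i) $ i * (axis i 1 $ k))"
    by (simp add: shiftS_def tau_def pw_def Proj_def e_def sum_component minus_prod_def)
  also have "\<dots> = f (x - u k) $ k"
    by (simp add: axis_def if_distrib cong: if_cong)
  finally show ?thesis .
qed

lemma shiftS_adj_component: "shiftS_adj f x $ k = f (x + u k) $ k"
proof -
  have "shiftS_adj f x $ k = (\<Sum>i\<in>UNIV. f (x + u i) $ i * (axis i 1 $ k))"
    by (simp add: shiftS_adj_def tau_def pw_def Proj_def e_def sum_component plus_prod_def)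
  also have "\<dots> = f (x + u k) $ k"
    by (simp add: axis_def if_distrib cong: if_cong)
  finally show ?thesis .
qed

lemma shiftS_adj_shiftS: "shiftS_adj (shiftS f) = f"
  by (simp add: fun_eq_iff vec_eq_iff shiftS_adj_component shiftS_component)

lemma shiftS_uminus: "shiftS (\<lambda>x. - f x) = (\<lambda>x. - shiftS f x)"
  by (simp add: fun_eq_iff vec_eq_iff shiftS_component)

lemma G3_mult_component: "(G3 *v v) $ k = 2/3 * (\<Sum>j\<in>UNIV. v $ j) - v $ k"
proof -
  have "G3 $ k $ j = (2/3 :: real) *\<^sub>R 1 - (if k = j then 1 else 0)" for j
    by (simp add: G3_def J3_def mat_def)
  then have entry: "G3 $ k $ j = 2/3 - (if k = j then 1 else 0)" for j
    by (simp add: scaleR_conv_of_real)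
  have "(G3 *v v) $ k = (\<Sum>j\<in>UNIV. (2/3 - (if k = j then 1 else 0)) * v $ j)"
    by (simp only: matrix_vector_mult_def vec_lambda_beta entry)
  also have "\<dots> = (\<Sum>j\<in>UNIV. 2/3 * v $ j - (if k = j then v $ j else 0))"
    by (rule sum.cong) (simp_all add: left_diff_distrib)
  also have "\<dots> = 2/3 * (\<Sum>j\<in>UNIV. v $ j) - v $ k"
    by (simp add: sum_subtractf sum_distrib_left)
  finally show ?thesis .
qed

lemma G3_mult_sum_zero: "(\<Sum>j\<in>UNIV. v $ j) = 0 \<Longrightarrow> G3 *v v = - v"
  by (simp add: vec_eq_iff G3_mult_component)

lemma Uop_fixes_balanced:
  assumes "\<And>x. (\<Sum>k\<in>UNIV. f x $ k) = 0"
    and "\<And>x. (\<Sum>k\<in>UNIV. shiftS f x $ k) = 0"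
  shows "Uop f = f"
proof -
  have "pw ((*v) G3) f = (\<lambda>x. - f x)"
    using assms(1) by (simp add: fun_eq_iff pw_def G3_mult_sum_zero)
  moreover have "pw ((*v) G3) (\<lambda>x. - shiftS f x) = shiftS f"
    using assms(2) by (simp add: fun_eq_iff pw_def G3_mult_sum_zero sum_negf)
  ultimately show ?thesis
    by (simp add: Uop_def shiftS_uminus shiftS_adj_shiftS)
qed

lemma finite_support_in_ell2: "finite {x. f x \<noteq> 0} \<Longrightarrow> f \<in> ell2"
  unfolding ell2_def by (auto intro: finite_nonzero_values_imp_summable_on)

text \<open>
  The sites \<open>p\<^sub>0 = (0,0)\<close>, \<open>p\<^sub>1 = (-1,-2)\<close>, \<open>p\<^sub>2 = (1,-1)\<close> satisfy \<open>p\<^sub>0 + u\<^sub>1 = p\<^sub>2 + u\<^sub>2\<close>,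
  \<open>p\<^sub>1 + u\<^sub>1 = p\<^sub>2 + u\<^sub>3\<close> and \<open>p\<^sub>1 + u\<^sub>2 = p\<^sub>0 + u\<^sub>3\<close>, which makes the shifted entries cancel.
\<close>
definition eigvec :: field2 where
  "eigvec x = vector
     [of_bool (x = (0, 0)) - of_bool (x = (-1, -2)),
      of_bool (x = (-1, -2)) - of_bool (x = (1, -1)),
      of_bool (x = (1, -1)) - of_bool (x = (0, 0))]"

lemma eigvec_balanced: "(\<Sum>k\<in>UNIV. eigvec x $ k) = 0"
  by (simp add: eigvec_def sum_3)

lemma shiftS_eigvec_balanced: "(\<Sum>k\<in>UNIV. shiftS eigvec x $ k) = 0"
  by (cases x) (auto simp: sum_3 shiftS_component eigvec_def u_def)

lemma eigvec_in_ell2: "eigvec \<in> ell2"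
proof (rule finite_support_in_ell2)
  have "{x. eigvec x \<noteq> 0} \<subseteq> {(0, 0), (-1, -2), (1, -1)}"
    by (auto simp: eigvec_def vec_eq_iff forall_3)
  then show "finite {x. eigvec x \<noteq> 0}"
    by (rule finite_subset) simp
qed

lemma eigvec_nonzero: "eigvec \<noteq> (\<lambda>_. 0)"
proof -
  have "eigvec (0, 0) $ 1 \<noteq> 0"
    by (simp add: eigvec_def)
  then show ?thesis
    by (metis zero_index)
qed

theorem corollary5p2:
  shows "has_eigenvalue Uop 1"
  unfolding has_eigenvalue_def
proof (intro bexI conjI)
  show "Uop eigvec = (\<lambda>x. 1 *s eigvec x)"
    using Uop_fixes_balanced[OF eigvec_balanced shiftS_eigvec_balanced] by simp
qed (fact eigvec_nonzero eigvec_in_ell2)+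

end
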